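(* Assume (A1) and (A2) and let $\ell_n=n^s$ with $s\in(0.5,1)$. Then under the null hypothesis $\sigma\equiv\sigma_H$, $$\sqrt n\,(U_1(n)-U_2(n))\xrightarrow{P}0\qquad(n\to\infty).$$
   Context: Let $(Y_i)_{i\in\mathbb N}$ be a strictly stationary real-valued process with $E[Y_1]=0$, $\mathrm{Var}(Y_1)=1$, which is absolutely regular, i.e. $\beta_Y(k):=\sup_{m\in\mathbb N}\beta\big(\sigma(Y_i,1\le i\le m),\sigma(Y_i,i\ge k+m)\big)\to0$ as $k\to\infty$, where $\beta(\mathcal A,\mathcal B)=E\big[\operatorname{ess\,sup}_{A\in\mathcal A}|P(A\mid\mathcal B)-P(A)|\big]$. Let $\mu:[0,1]\to\mathbb R$ be Lipschitz-continuous and $\sigma:[0,1]\to[\sigma_0,\infty)$ be càdlàg for some constant $\sigma_0>0$. The observations are $X_i=X_{i,n}=\sigma(i/n)Y_i+\mu(i/n)$, $1\le i\le n$. The null hypothesis means $\sigma\equiv\sigma_H$ for a constant $\sigma_H>0$. The long-run variance $\kappa^2:=\mathrm{Var}(Y_1^2)+2\sum_{k\ge1}\mathrm{Cov}(Y_1^2,Y_{k+1}^2)$ is assumed finite and strictly positive. The block length is $\ell_n=n^s$ and $b_n=n/\ell_n$ (integers); the $j$-th block is $\{(j-1)\ell_n+1,\dots,j\ell_n\}$. Define $s_j^2=\frac1{\ell_n}\sum_{i=(j-1)\ell_n+1}^{j\ell_n}(X_i-\mu(i/n))^2$, $U_1(n)=\frac{1}{b_n(b_n-1)}\sum_{1\le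 j\ne k\le b_n}|\log s_j^2-\log s_k^2|$, $S_j=\frac1{\ell_n}\sum_{i=(j-1)\ell_n+1}^{j\ell_n}Y_i^2-1$, and $U_2(n)=\frac{1}{b_n(b_n-1)}\sum_{1\le j\ne k\le b_n}|S_j-S_k|$. Assumptions: (A1) there is $\vartheta>0$ with $E|Y_1|^{4+2\vartheta}<\infty$; (A2) for the same $\vartheta$, $\sum_{k=1}^\infty\beta_Y(k)^{\vartheta/(2+\vartheta)}<\infty$. *)

theory Defs
  imports "HOL-Probability.Probability"
begin

text \<open>Sigma-algebra generated by the random variables Y i, i in I (as a measure on space M;
  only its sets are relevant).\<close>
definition gen_sigma :: "'a measure \<Rightarrow> (nat \<Rightarrow> 'a \<Rightarrow> real) \<Rightarrow> nat set \<Rightarrow> 'a measure" where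
  "gen_sigma M Y I = sigma (space M) {Y i -` B \<inter> space M | i B. i \<in> I \<and> B \<in> sets borel}"

text \<open>Absolute regularity coefficient beta(A,B) = E[ess sup over S in A of |P(S|B) - P(S)|].
  The essential supremum of the family is the a.e.-smallest measurable function dominating
  every member a.e.; its expectation is the infimum of the expectations of all such dominating
  functions, which is how it is written here.\<close>
definition beta_coeff :: "'a measure \<Rightarrow> 'a measure \<Rightarrow> 'a measure \<Rightarrow> real" where
  "beta_coeff M A B = enn2real (INF g \<in> {g :: 'a \<Rightarrow> ennreal. g \<in> borel_measurable M \<and>
       (\<forall>S\<in>sets A. AE x in M. ennreal \<bar>real_cond_exp M B (indicator S) x - measure M S\<bar> \<le> g x)}.
       \<integral>\<^sup>+ x. g x \<partial>M)"

definition beta_Y :: "'a measure \<Rightarrow> (nat \<Rightarrow> 'a \<Rightarrow> real) \<Rightarrow> nat \<Rightarrow> real" where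
  "beta_Y M Y k = (SUP m \<in> {1..}. beta_coeff M (gen_sigma M Y {1..m}) (gen_sigma M Y {k+m..}))"

definition strictly_stationary :: "'a measure \<Rightarrow> (nat \<Rightarrow> 'a \<Rightarrow> real) \<Rightarrow> bool" where
  "strictly_stationary M Y \<longleftrightarrow> (\<forall>m h.
     distr M (PiM {..<m} (\<lambda>_. borel)) (\<lambda>x. \<lambda>i\<in>{..<m}. Y (Suc i + h) x) =
     distr M (PiM {..<m} (\<lambda>_. borel)) (\<lambda>x. \<lambda>i\<in>{..<m}. Y (Suc i) x))"

definition blen :: "real \<Rightarrow> nat \<Rightarrow> nat" where
  "blen s n = nat \<lfloor>real n powr s\<rfloor>"

definition nblocks :: "real \<Rightarrow> nat \<Rightarrow> nat" where
  "nblocks s n = n div blen s n"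

definition obs :: "(real \<Rightarrow> real) \<Rightarrow> (real \<Rightarrow> real) \<Rightarrow> (nat \<Rightarrow> 'a \<Rightarrow> real) \<Rightarrow> nat \<Rightarrow> nat \<Rightarrow> 'a \<Rightarrow> real" where
  "obs sig mu Y n i x = sig (real i / real n) * Y i x + mu (real i / real n)"

definition block_var :: "real \<Rightarrow> (real \<Rightarrow> real) \<Rightarrow> (real \<Rightarrow> real) \<Rightarrow> (nat \<Rightarrow> 'a \<Rightarrow> real) \<Rightarrow> nat \<Rightarrow> nat \<Rightarrow> 'a \<Rightarrow> real" where
  "block_var s sig mu Y n j x = (1 / real (blen s n)) *
     (\<Sum>i\<in>{(j-1) * blen s n + 1 .. j * blen s n}. (obs sig mu Y n i x - mu (real i / real n))\<^sup>2)"

definition U1 :: "real \<Rightarrow> (real \<Rightarrow> real) \<Rightarrow> (real \<Rightarrow> real) \<Rightarrow> (nat \<Rightarrow> 'a \<Rightarrow> real) \<Rightarrow> nat \<Rightarrow> 'a \<Rightarrow> real" where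
  "U1 s sig mu Y n x = (1 / (real (nblocks s n) * (real (nblocks s n) - 1))) *
     (\<Sum>j\<in>{1..nblocks s n}. \<Sum>k\<in>{1..nblocks s n} - {j}.
        \<bar>ln (block_var s sig mu Y n j x) - ln (block_var s sig mu Y n k x)\<bar>)"

definition block_S :: "real \<Rightarrow> (nat \<Rightarrow> 'a \<Rightarrow> real) \<Rightarrow> nat \<Rightarrow> nat \<Rightarrow> 'a \<Rightarrow> real" where
  "block_S s Y n j x = (1 / real (blen s n)) * (\<Sum>i\<in>{(j-1) * blen s n + 1 .. j * blen s n}. (Y i x)\<^sup>2) - 1"

definition U2 :: "real \<Rightarrow> (nat \<Rightarrow> 'a \<Rightarrow> real) \<Rightarrow> nat \<Rightarrow> 'a \<Rightarrow> real" where
  "U2 s Y n x = (1 / (real (nblocks s n) * (real (nblocks s n) - 1))) *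
     (\<Sum>j\<in>{1..nblocks s n}. \<Sum>k\<in>{1..nblocks s n} - {j}. \<bar>block_S s Y n j x - block_S s Y n k x\<bar>)"

end

theory Submission
  imports Defs
begin

text \<open>Under the null hypothesis, \<open>s\<^sub>j\<^sup>2 = \<sigma>\<^sub>H\<^sup>2 (1 + S\<^sub>j)\<close>, so the drift \<open>\<mu>\<close> and the scale drop out of
  the log differences, and \<open>ln (1 + u) = u + O(u\<^sup>2)\<close> gives \<open>\<bar>U\<^sub>1 - U\<^sub>2\<bar> \<le> (4 / b\<^sub>n) \<Sum>\<^sub>j S\<^sub>j\<^sup>2\<close>
  as soon as \<open>\<Sum>\<^sub>j S\<^sub>j\<^sup>2 < 1/4\<close>. By stationarity and summability of the autocovariances of
  \<open>Y\<^sub>i\<^sup>2\<close>, \<open>E S\<^sub>j\<^sup>2 = O(1 / l\<^sub>n)\<close>, hence \<open>E \<Sum>\<^sub>j S\<^sub>j\<^sup>2 = O(b\<^sub>n / l\<^sub>n) = O(n\<^bsup>1-2s\<^esup>)\<close>, and Markov's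
  inequality shows that \<open>\<surd>n (U\<^sub>1 - U\<^sub>2)\<close> is of order \<open>\<surd>n / l\<^sub>n = n\<^bsup>1/2-s\<^esup>\<close> in probability.\<close>

section \<open>Second moments of block means of a stationary sequence\<close>

lemma strictly_stationary_pair:
  fixes M :: "'a measure" and Y :: "nat \<Rightarrow> 'a \<Rightarrow> real" and F :: "real \<times> real \<Rightarrow> real"
  assumes meas: "\<And>i. Y i \<in> borel_measurable M"
    and stat: "strictly_stationary M Y"
    and F: "F \<in> borel_measurable borel"
    and ik: "1 \<le> i" "i \<le> k"
  shows "integrable M (\<lambda>x. F (Y i x, Y k x)) \<longleftrightarrow> integrable M (\<lambda>x. F (Y 1 x, Y (k - i + 1) x))"
    and "(\<integral>x. F (Y i x, Y k x) \<partial>M) = (\<integral>x. F (Y 1 x, Y (k - i + 1) x) \<partial>M)"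
proof -
  define m where "m = k - i + 1"
  define N where "N = PiM {..<m} (\<lambda>_. borel :: real measure)"
  define G where "G = (\<lambda>v :: nat \<Rightarrow> real. F (v 0, v (k - i)))"
  define shifted where "shifted = (\<lambda>x. \<lambda>j\<in>{..<m}. Y (Suc j + (i - 1)) x)"
  define unshifted where "unshifted = (\<lambda>x. \<lambda>j\<in>{..<m}. Y (Suc j) x)"
  have m: "0 \<in> {..<m}" "k - i \<in> {..<m}" unfolding m_def by auto
  have G: "G \<in> borel_measurable N"
    unfolding G_def N_def
    by (intro measurable_compose[OF _ F] borel_measurable_Pair measurable_component_singleton m)
  have shifted: "shifted \<in> measurable M N" and unshifted: "unshifted \<in> measurable M N"
    unfolding shifted_def unshifted_def N_def by (intro measurable_restrict meas)+
  have distr_eq: "distr M N shifted = distr M N unshifted"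
    using stat unfolding strictly_stationary_def N_def shifted_def unshifted_def by blast
  have "G (shifted x) = F (Y i x, Y k x)" "G (unshifted x) = F (Y 1 x, Y (k - i + 1) x)" for x
    using m ik unfolding G_def shifted_def unshifted_def by (auto simp: Suc_diff_le)
  then show "integrable M (\<lambda>x. F (Y i x, Y k x)) \<longleftrightarrow> integrable M (\<lambda>x. F (Y 1 x, Y (k - i + 1) x))"
    and "(\<integral>x. F (Y i x, Y k x) \<partial>M) = (\<integral>x. F (Y 1 x, Y (k - i + 1) x) \<partial>M)"
    using integrable_distr_eq[OF shifted G] integrable_distr_eq[OF unshifted G]
      integral_distr[OF shifted G] integral_distr[OF unshifted G] distr_eq by simp_all
qed

definition absdiff :: "nat \<Rightarrow> nat \<Rightarrow> nat" where
  "absdiff i k = (if i \<le> k then k - i else i - k)"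

lemma sum_absdiff_upto_diag:
  assumes "1 \<le> i"
  shows "(\<Sum>k\<in>{1..i}. g (absdiff i k)) = g 0 + (\<Sum>d<i - 1. g (Suc d))"
proof -
  have "(\<Sum>k\<in>{1..i}. g (absdiff i k)) = (\<Sum>k<i. g (absdiff i (Suc k)))"
    by (simp add: sum.atLeast1_atMost_eq)
  also have "\<dots> = (\<Sum>k<i. g (i - Suc k))"
    by (intro sum.cong) (auto simp: absdiff_def)
  also have "\<dots> = sum g {..<i}" by (rule sum.nat_diff_reindex)
  also have "\<dots> = g 0 + (\<Sum>d<i - 1. g (Suc d))"
    using assms by (cases i) (auto simp: sum.lessThan_Suc_shift simp del: sum.lessThan_Suc)
  finally show ?thesis .
qed

lemma sum_absdiff_row:
  assumes "1 \<le> i" "i \<le> L"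
  shows "(\<Sum>k\<in>{1..L}. g (absdiff i k)) = g 0 + (\<Sum>d<i - 1. g (Suc d)) + (\<Sum>d<L - i. g (Suc d))"
  using assms
proof (induction L)
  case 0
  then show ?case by simp
next
  case (Suc L)
  show ?case
  proof (cases "Suc L = i")
    case True
    then show ?thesis using sum_absdiff_upto_diag[OF Suc.prems(1)] by simp
  next
    case False
    then have "i \<le> L" using Suc.prems by simp
    then show ?thesis
      using Suc.IH[OF Suc.prems(1)] by (simp add: absdiff_def Suc_diff_le ac_simps)
  qed
qed

lemma sum_absdiff_row_shift:
  assumes "a < i" "i \<le> a + L"
  shows "(\<Sum>k\<in>{a+1..a+L}. g (absdiff i k)) = g 0 + (\<Sum>d<i - a - 1. g (Suc d)) + (\<Sum>d<a + L - i. g (Suc d))"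
proof -
  have "(\<Sum>k\<in>{a+1..a+L}. g (absdiff i k)) = (\<Sum>k\<in>{1..L}. g (absdiff i (k + a)))"
    using sum.shift_bounds_cl_nat_ivl[of "\<lambda>k. g (absdiff i k)" 1 a L] by (simp add: add.commute)
  also have "\<dots> = (\<Sum>k\<in>{1..L}. g (absdiff (i - a) k))"
    using assms by (intro sum.cong) (auto simp: absdiff_def add.commute)
  also have "\<dots> = g 0 + (\<Sum>d<i - a - 1. g (Suc d)) + (\<Sum>d<L - (i - a). g (Suc d))"
    using assms by (intro sum_absdiff_row) auto
  finally show ?thesis
    using assms by (simp add: add.commute)
qed

text \<open>Each row of the Toeplitz matrix \<open>(g (absdiff i k))\<close> splits into \<open>g 0\<close> and two partial sums of
  \<open>g \<circ> Suc\<close>, so bounded partial sums give a bound linear in the size of the block.\<close>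
lemma abs_sum_absdiff_block_le:
  assumes B: "\<And>m. \<bar>\<Sum>d<m. g (Suc d)\<bar> \<le> B"
  shows "\<bar>\<Sum>i\<in>{a+1..a+L}. \<Sum>k\<in>{a+1..a+L}. g (absdiff i k)\<bar> \<le> real L * (\<bar>g 0\<bar> + 2 * B)"
proof -
  have "\<bar>\<Sum>i\<in>{a+1..a+L}. \<Sum>k\<in>{a+1..a+L}. g (absdiff i k)\<bar>
      \<le> (\<Sum>i\<in>{a+1..a+L}. \<bar>\<Sum>k\<in>{a+1..a+L}. g (absdiff i k)\<bar>)"
    by (rule sum_abs)
  also have "\<dots> \<le> (\<Sum>i\<in>{a+1..a+L}. \<bar>g 0\<bar> + 2 * B)"
  proof (rule sum_mono)
    fix i assume "i \<in> {a+1..a+L}"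
    then have "(\<Sum>k\<in>{a+1..a+L}. g (absdiff i k)) = g 0 + (\<Sum>d<i - a - 1. g (Suc d)) + (\<Sum>d<a + L - i. g (Suc d))"
      by (intro sum_absdiff_row_shift) auto
    then show "\<bar>\<Sum>k\<in>{a+1..a+L}. g (absdiff i k)\<bar> \<le> \<bar>g 0\<bar> + 2 * B"
      using B[of "i - a - 1"] B[of "a + L - i"] by linarith
  qed
  finally show ?thesis by simp
qed

lemma sq_mult_sq_le_power4_add:
  fixes u v :: real
  shows "u\<^sup>2 * v\<^sup>2 \<le> u ^ 4 + v ^ 4"
proof -
  have "0 \<le> (u\<^sup>2 - v\<^sup>2)\<^sup>2" by simp
  then have "2 * (u\<^sup>2 * v\<^sup>2) \<le> u ^ 4 + v ^ 4"
    by (simp add: power2_eq_square algebra_simps power4_eq_xxxx)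
  moreover have "0 \<le> u\<^sup>2 * v\<^sup>2" by simp
  ultimately show ?thesis by linarith
qed

lemma power4_le_one_plus_abs_powr:
  fixes y theta :: real
  assumes "theta > 0"
  shows "y ^ 4 \<le> 1 + \<bar>y\<bar> powr (4 + 2 * theta)"
proof (cases "\<bar>y\<bar> \<le> 1")
  case True
  then have "\<bar>y\<bar> ^ 4 \<le> 1" by (intro power_le_one) auto
  then show ?thesis by (simp add: power_even_abs_numeral add_increasing2)
next
  case False
  then have "y ^ 4 = \<bar>y\<bar> powr (real 4)"
    by (simp add: powr_realpow power_even_abs_numeral)
  also have "\<dots> \<le> \<bar>y\<bar> powr (4 + 2 * theta)" using False assms by (intro powr_mono) auto
  finally show ?thesis by simp
qed

lemma (in prob_space) integrable_power4_if_integrable_abs_powr: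
  fixes X :: "'a \<Rightarrow> real" and theta :: real
  assumes "X \<in> borel_measurable M" "theta > 0" "integrable M (\<lambda>x. \<bar>X x\<bar> powr (4 + 2 * theta))"
  shows "integrable M (\<lambda>x. (X x) ^ 4)"
proof (rule Bochner_Integration.integrable_bound)
  show "integrable M (\<lambda>x. 1 + \<bar>X x\<bar> powr (4 + 2 * theta))" using assms(3) by simp
  show "AE x in M. norm ((X x) ^ 4) \<le> norm (1 + \<bar>X x\<bar> powr (4 + 2 * theta))"
    using power4_le_one_plus_abs_powr[OF assms(2)] by (intro AE_I2) (simp add: add_nonneg_nonneg)
qed (use assms(1) in measurable)

lemma block_S_eq:
  assumes "1 \<le> j"
  shows "block_S s Y n j x = (1 / real (blen s n)) *
     (\<Sum>i\<in>{(j-1) * blen s n + 1 .. (j-1) * blen s n + blen s n}. (Y i x)\<^sup>2) - 1"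
proof -
  have "j * blen s n = (j-1) * blen s n + blen s n" using assms by (cases j) auto
  then show ?thesis unfolding block_S_def by simp
qed

locale stationary_L4_process = prob_space M for M :: "'a measure" +
  fixes Y :: "nat \<Rightarrow> 'a \<Rightarrow> real"
  assumes measurable_Y [measurable]: "\<And>i. Y i \<in> borel_measurable M"
    and stationary: "strictly_stationary M Y"
    and integrable_sq: "integrable M (\<lambda>x. (Y 1 x)\<^sup>2)"
    and expectation_sq: "expectation (\<lambda>x. (Y 1 x)\<^sup>2) = 1"
    and integrable_power4: "integrable M (\<lambda>x. (Y 1 x) ^ 4)"
begin

text \<open>Since \<open>E Y\<^sub>1\<^sup>2 = 1\<close>, this is \<open>Cov(Y\<^sub>1\<^sup>2, Y\<^bsub>d+1\<^esub>\<^sup>2)\<close>; the long-run variance is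
  \<open>\<kappa>\<^sup>2 = sq_autocov 0 + 2 \<Sum>\<^bsub>d\<ge>1\<^esub> sq_autocov d\<close>.\<close>
definition sq_autocov :: "nat \<Rightarrow> real" where
  "sq_autocov d = expectation (\<lambda>x. (Y 1 x)\<^sup>2 * (Y (d + 1) x)\<^sup>2) - 1"

lemma integrable_sq_Y:
  assumes "1 \<le> i"
  shows "integrable M (\<lambda>x. (Y i x)\<^sup>2)" and "expectation (\<lambda>x. (Y i x)\<^sup>2) = 1"
proof -
  have F: "(\<lambda>p. (fst p)\<^sup>2) \<in> borel_measurable (borel :: (real \<times> real) measure)"
    by (intro borel_measurable_continuous_onI continuous_intros)
  show "integrable M (\<lambda>x. (Y i x)\<^sup>2)" and "expectation (\<lambda>x. (Y i x)\<^sup>2) = 1"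
    using strictly_stationary_pair[OF measurable_Y stationary F assms order_refl]
      integrable_sq expectation_sq by simp_all
qed

lemma integrable_power4_Y:
  assumes "1 \<le> i"
  shows "integrable M (\<lambda>x. (Y i x) ^ 4)"
proof -
  have F: "(\<lambda>p. (fst p) ^ 4) \<in> borel_measurable (borel :: (real \<times> real) measure)"
    by (intro borel_measurable_continuous_onI continuous_intros)
  show ?thesis
    using strictly_stationary_pair(1)[OF measurable_Y stationary F assms order_refl]
      integrable_power4 by simp
qed

lemma integrable_sq_mult_sq_Y:
  assumes "1 \<le> i" "1 \<le> k"
  shows "integrable M (\<lambda>x. (Y i x)\<^sup>2 * (Y k x)\<^sup>2)"
proof (rule Bochner_Integration.integrable_bound)
  show "integrable M (\<lambda>x. (Y i x) ^ 4 + (Y k x) ^ 4)"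
    using integrable_power4_Y[OF assms(1)] integrable_power4_Y[OF assms(2)] by simp
  show "AE x in M. norm ((Y i x)\<^sup>2 * (Y k x)\<^sup>2) \<le> norm ((Y i x) ^ 4 + (Y k x) ^ 4)"
    using sq_mult_sq_le_power4_add by (intro AE_I2) (simp add: add_nonneg_nonneg)
qed measurable

lemma expectation_sq_mult_sq_Y:
  assumes "1 \<le> i" "1 \<le> k"
  shows "expectation (\<lambda>x. (Y i x)\<^sup>2 * (Y k x)\<^sup>2) = sq_autocov (absdiff i k) + 1"
proof -
  have F: "(\<lambda>p. (fst p)\<^sup>2 * (snd p)\<^sup>2) \<in> borel_measurable (borel :: (real \<times> real) measure)"
    by (intro borel_measurable_continuous_onI continuous_intros)
  show ?thesis
  proof (cases "i \<le> k")
    case True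
    then show ?thesis
      using strictly_stationary_pair(2)[OF measurable_Y stationary F assms(1) True]
      by (simp add: sq_autocov_def absdiff_def)
  next
    case False
    then show ?thesis
      using strictly_stationary_pair(2)[OF measurable_Y stationary F assms(2), of i]
      by (simp add: sq_autocov_def absdiff_def mult.commute)
  qed
qed

lemma centered_sq_prod_Y:
  assumes "1 \<le> i" "1 \<le> k"
  shows "integrable M (\<lambda>x. ((Y i x)\<^sup>2 - 1) * ((Y k x)\<^sup>2 - 1))"
    and "expectation (\<lambda>x. ((Y i x)\<^sup>2 - 1) * ((Y k x)\<^sup>2 - 1)) = sq_autocov (absdiff i k)"
proof -
  have expand: "((Y i x)\<^sup>2 - 1) * ((Y k x)\<^sup>2 - 1) = (Y i x)\<^sup>2 * (Y k x)\<^sup>2 - (Y i x)\<^sup>2 - (Y k x)\<^sup>2 + 1" for x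
    by (simp add: algebra_simps)
  note integrable = integrable_sq_mult_sq_Y[OF assms] integrable_sq_Y(1)[OF assms(1)]
    integrable_sq_Y(1)[OF assms(2)]
  show "integrable M (\<lambda>x. ((Y i x)\<^sup>2 - 1) * ((Y k x)\<^sup>2 - 1))"
    unfolding expand using integrable by auto
  show "expectation (\<lambda>x. ((Y i x)\<^sup>2 - 1) * ((Y k x)\<^sup>2 - 1)) = sq_autocov (absdiff i k)"
    unfolding expand using integrable expectation_sq_mult_sq_Y[OF assms]
      integrable_sq_Y(2)[OF assms(1)] integrable_sq_Y(2)[OF assms(2)]
    by (simp add: Bochner_Integration.integral_add Bochner_Integration.integral_diff prob_space)
qed

lemma block_mean_sq_second_moment:
  assumes L: "1 \<le> L"
  shows "integrable M (\<lambda>x. ((1 / real L) * (\<Sum>i\<in>{a+1..a+L}. (Y i x)\<^sup>2) - 1)\<^sup>2)"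
    and "expectation (\<lambda>x. ((1 / real L) * (\<Sum>i\<in>{a+1..a+L}. (Y i x)\<^sup>2) - 1)\<^sup>2)
      = (\<Sum>i\<in>{a+1..a+L}. \<Sum>k\<in>{a+1..a+L}. sq_autocov (absdiff i k)) / (real L)\<^sup>2"
proof -
  let ?C = "\<lambda>i k x. ((Y i x)\<^sup>2 - 1) * ((Y k x)\<^sup>2 - 1)"
  have expand: "((1 / real L) * (\<Sum>i\<in>{a+1..a+L}. (Y i x)\<^sup>2) - 1)\<^sup>2
      = (\<Sum>i\<in>{a+1..a+L}. \<Sum>k\<in>{a+1..a+L}. ?C i k x) / (real L)\<^sup>2" for x
  proof -
    have "(1 / real L) * (\<Sum>i\<in>{a+1..a+L}. (Y i x)\<^sup>2) - 1 = (1 / real L) * (\<Sum>i\<in>{a+1..a+L}. (Y i x)\<^sup>2 - 1)"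
      using L by (simp add: sum_subtractf field_simps)
    then show ?thesis
      by (simp add: power2_eq_square sum_product field_simps)
  qed
  have integrable_row: "integrable M (\<lambda>x. \<Sum>k\<in>{a+1..a+L}. ?C i k x)" if "i \<in> {a+1..a+L}" for i
    using that by (intro Bochner_Integration.integrable_sum centered_sq_prod_Y) auto
  show "integrable M (\<lambda>x. ((1 / real L) * (\<Sum>i\<in>{a+1..a+L}. (Y i x)\<^sup>2) - 1)\<^sup>2)"
    unfolding expand by (intro integrable_divide Bochner_Integration.integrable_sum integrable_row)
  have "expectation (\<lambda>x. \<Sum>i\<in>{a+1..a+L}. \<Sum>k\<in>{a+1..a+L}. ?C i k x)
      = (\<Sum>i\<in>{a+1..a+L}. \<Sum>k\<in>{a+1..a+L}. expectation (?C i k))"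
    using integrable_row centered_sq_prod_Y(1)
    by (simp add: Bochner_Integration.integral_sum Bochner_Integration.integrable_sum)
  also have "\<dots> = (\<Sum>i\<in>{a+1..a+L}. \<Sum>k\<in>{a+1..a+L}. sq_autocov (absdiff i k))"
    by (intro sum.cong refl centered_sq_prod_Y(2)) auto
  finally show "expectation (\<lambda>x. ((1 / real L) * (\<Sum>i\<in>{a+1..a+L}. (Y i x)\<^sup>2) - 1)\<^sup>2)
      = (\<Sum>i\<in>{a+1..a+L}. \<Sum>k\<in>{a+1..a+L}. sq_autocov (absdiff i k)) / (real L)\<^sup>2"
    unfolding expand by simp
qed

lemma block_mean_sq_second_moment_le:
  assumes "summable (\<lambda>d. sq_autocov (Suc d))"
  obtains K where "\<And>a L. 1 \<le> L \<Longrightarrow>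
    expectation (\<lambda>x. ((1 / real L) * (\<Sum>i\<in>{a+1..a+L}. (Y i x)\<^sup>2) - 1)\<^sup>2) \<le> K / real L"
proof -
  have "Bseq (\<lambda>m. \<Sum>d<m. sq_autocov (Suc d))"
    using assms by (intro convergent_imp_Bseq) (simp add: summable_iff_convergent)
  then obtain B where B: "\<And>m. \<bar>\<Sum>d<m. sq_autocov (Suc d)\<bar> \<le> B"
    unfolding Bseq_def by auto
  show ?thesis
  proof
    fix a L :: nat assume L: "1 \<le> L"
    have "(\<Sum>i\<in>{a+1..a+L}. \<Sum>k\<in>{a+1..a+L}. sq_autocov (absdiff i k)) / (real L)\<^sup>2
        \<le> real L * (\<bar>sq_autocov 0\<bar> + 2 * B) / (real L)\<^sup>2"
      using abs_sum_absdiff_block_le[of sq_autocov B a L] B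
      by (intro divide_right_mono) auto
    also have "\<dots> = (\<bar>sq_autocov 0\<bar> + 2 * B) / real L"
      using L by (simp add: power2_eq_square)
    finally show "expectation (\<lambda>x. ((1 / real L) * (\<Sum>i\<in>{a+1..a+L}. (Y i x)\<^sup>2) - 1)\<^sup>2)
        \<le> (\<bar>sq_autocov 0\<bar> + 2 * B) / real L"
      using block_mean_sq_second_moment(2)[OF L] by simp
  qed
qed

lemma sum_block_S_sq_bound:
  assumes "summable (\<lambda>d. sq_autocov (Suc d))"
  obtains K where "\<And>s n. 1 \<le> blen s n \<Longrightarrow>
      integrable M (\<lambda>x. \<Sum>j\<in>{1..nblocks s n}. (block_S s Y n j x)\<^sup>2) \<and>
      expectation (\<lambda>x. \<Sum>j\<in>{1..nblocks s n}. (block_S s Y n j x)\<^sup>2) \<le> real (nblocks s n) * K / real (blen s n)"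
proof -
  obtain K where K: "\<And>a L. 1 \<le> L \<Longrightarrow>
      expectation (\<lambda>x. ((1 / real L) * (\<Sum>i\<in>{a+1..a+L}. (Y i x)\<^sup>2) - 1)\<^sup>2) \<le> K / real L"
    using block_mean_sq_second_moment_le[OF assms] by blast
  show ?thesis
  proof
    fix s n assume L: "1 \<le> blen s n"
    have block: "integrable M (\<lambda>x. (block_S s Y n j x)\<^sup>2)
        \<and> expectation (\<lambda>x. (block_S s Y n j x)\<^sup>2) \<le> K / real (blen s n)" if "j \<in> {1..nblocks s n}" for j
      using that block_mean_sq_second_moment(1)[OF L, of "(j - 1) * blen s n"] K[OF L, of "(j - 1) * blen s n"]
      by (simp add: block_S_eq add.commute)
    have "expectation (\<lambda>x. \<Sum>j\<in>{1..nblocks s n}. (block_S s Y n j x)\<^sup>2)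
        = (\<Sum>j\<in>{1..nblocks s n}. expectation (\<lambda>x. (block_S s Y n j x)\<^sup>2))"
      using block by (intro Bochner_Integration.integral_sum) auto
    also have "\<dots> \<le> (\<Sum>j\<in>{1..nblocks s n}. K / real (blen s n))"
      using block by (intro sum_mono) auto
    finally show "integrable M (\<lambda>x. \<Sum>j\<in>{1..nblocks s n}. (block_S s Y n j x)\<^sup>2) \<and>
        expectation (\<lambda>x. \<Sum>j\<in>{1..nblocks s n}. (block_S s Y n j x)\<^sup>2) \<le> real (nblocks s n) * K / real (blen s n)"
      using block by auto
  qed
qed

end

section \<open>Linearisation of the logarithmic U-statistic\<close>

lemma sum_offdiag_pairs:
  fixes f :: "nat \<Rightarrow> real"
  shows "(\<Sum>j\<in>{1..b}. \<Sum>k\<in>{1..b} - {j}. f j + f k) = 2 * (real b - 1) * (\<Sum>j\<in>{1..b}. f j)"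
proof -
  have "(\<Sum>j\<in>{1..b}. \<Sum>k\<in>{1..b} - {j}. f j + f k)
      = (\<Sum>j\<in>{1..b}. (real b - 1) * f j + ((\<Sum>k\<in>{1..b}. f k) - f j))"
  proof (intro sum.cong refl)
    fix j assume j: "j \<in> {1..b}"
    then have "card ({1..b} - {j}) = b - 1" "real (b - 1) = real b - 1" by auto
    then show "(\<Sum>k\<in>{1..b} - {j}. f j + f k) = (real b - 1) * f j + ((\<Sum>k\<in>{1..b}. f k) - f j)"
      using j by (simp add: sum.distrib sum_diff1)
  qed
  also have "\<dots> = 2 * (real b - 1) * (\<Sum>j\<in>{1..b}. f j)"
    by (simp add: sum.distrib sum_subtractf sum_distrib_left[symmetric] sum_distrib_right[symmetric] algebra_simps)
  finally show ?thesis .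
qed

lemma abs_abs_ln_diff_minus_abs_diff_le:
  fixes q u v :: real
  assumes "q > 0" "\<bar>u\<bar> \<le> 1/2" "\<bar>v\<bar> \<le> 1/2"
  shows "\<bar>\<bar>ln (q * (1 + u)) - ln (q * (1 + v))\<bar> - \<bar>u - v\<bar>\<bar> \<le> 2 * u\<^sup>2 + 2 * v\<^sup>2"
proof -
  have "1 + u > 0" "1 + v > 0" using assms by auto
  then have "ln (q * (1 + u)) - ln (q * (1 + v)) = ln (1 + u) - ln (1 + v)"
    using assms(1) by (simp add: ln_mult)
  then show ?thesis
    using abs_ln_one_plus_x_minus_x_bound[OF assms(2)] abs_ln_one_plus_x_minus_x_bound[OF assms(3)]
    by linarith
qed

text \<open>With \<open>ln (1 + u) = u + O(u\<^sup>2)\<close>, each of the \<open>b (b - 1)\<close> pairs contributes an error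
  \<open>O(S\<^sub>j\<^sup>2 + S\<^sub>k\<^sup>2)\<close>, and each index occurs in \<open>2 (b - 1)\<close> pairs.\<close>
lemma ustat_abs_ln_linearisation:
  fixes S :: "nat \<Rightarrow> real" and q :: real
  assumes q: "q > 0" and S: "\<And>j. j \<in> {1..b} \<Longrightarrow> \<bar>S j\<bar> \<le> 1/2"
  defines "c \<equiv> 1 / (real b * (real b - 1))"
  shows "\<bar>c * (\<Sum>j\<in>{1..b}. \<Sum>k\<in>{1..b} - {j}. \<bar>ln (q * (1 + S j)) - ln (q * (1 + S k))\<bar>)
        - c * (\<Sum>j\<in>{1..b}. \<Sum>k\<in>{1..b} - {j}. \<bar>S j - S k\<bar>)\<bar>
        \<le> 4 / real b * (\<Sum>j\<in>{1..b}. (S j)\<^sup>2)"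
proof -
  have c0: "0 \<le> c" unfolding c_def by (cases b) auto
  have cb: "c * (4 * (real b - 1)) \<le> 4 / real b"
  proof (cases "b \<le> 1")
    case True
    then have "c = 0" unfolding c_def by (cases b) auto
    then show ?thesis by simp
  next
    case False
    then show ?thesis unfolding c_def by (simp add: field_simps)
  qed
  have pair_err: "\<bar>\<bar>ln (q * (1 + S j)) - ln (q * (1 + S k))\<bar> - \<bar>S j - S k\<bar>\<bar> \<le> 2 * (S j)\<^sup>2 + 2 * (S k)\<^sup>2"
    if "j \<in> {1..b}" "k \<in> {1..b}" for j k
    using S that by (intro abs_abs_ln_diff_minus_abs_diff_le q) auto
  have "\<bar>c * (\<Sum>j\<in>{1..b}. \<Sum>k\<in>{1..b} - {j}. \<bar>ln (q * (1 + S j)) - ln (q * (1 + S k))\<bar>)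
        - c * (\<Sum>j\<in>{1..b}. \<Sum>k\<in>{1..b} - {j}. \<bar>S j - S k\<bar>)\<bar>
      = c * \<bar>\<Sum>j\<in>{1..b}. \<Sum>k\<in>{1..b} - {j}.
              \<bar>ln (q * (1 + S j)) - ln (q * (1 + S k))\<bar> - \<bar>S j - S k\<bar>\<bar>"
    using c0 by (simp add: right_diff_distrib[symmetric] sum_subtractf abs_mult)
  also have "\<dots> \<le> c * (\<Sum>j\<in>{1..b}. \<Sum>k\<in>{1..b} - {j}. 2 * (S j)\<^sup>2 + 2 * (S k)\<^sup>2)"
  proof (rule mult_left_mono[OF _ c0])
    show "\<bar>\<Sum>j\<in>{1..b}. \<Sum>k\<in>{1..b} - {j}.
              \<bar>ln (q * (1 + S j)) - ln (q * (1 + S k))\<bar> - \<bar>S j - S k\<bar>\<bar>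
        \<le> (\<Sum>j\<in>{1..b}. \<Sum>k\<in>{1..b} - {j}. 2 * (S j)\<^sup>2 + 2 * (S k)\<^sup>2)"
      by (rule order_trans[OF sum_abs sum_mono[OF order_trans[OF sum_abs sum_mono]]])
        (auto intro: pair_err)
  qed
  also have "\<dots> = c * (2 * (real b - 1) * (\<Sum>j\<in>{1..b}. 2 * (S j)\<^sup>2))"
    by (simp only: sum_offdiag_pairs[of "\<lambda>j. 2 * (S j)\<^sup>2" b])
  also have "\<dots> = c * (4 * (real b - 1)) * (\<Sum>j\<in>{1..b}. (S j)\<^sup>2)"
    by (simp add: sum_distrib_left[symmetric])
  also have "\<dots> \<le> 4 / real b * (\<Sum>j\<in>{1..b}. (S j)\<^sup>2)"
    by (intro mult_right_mono cb sum_nonneg) auto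
  finally show ?thesis .
qed

lemma block_var_const_eq: "block_var s (\<lambda>_. sig) mu Y n j x = sig\<^sup>2 * (1 + block_S s Y n j x)"
  unfolding block_var_def block_S_def obs_def
  by (simp add: power_mult_distrib sum_distrib_left[symmetric] algebra_simps)

lemma abs_U1_const_minus_U2_le:
  fixes sig :: real
  assumes "sig \<noteq> 0" and small: "(\<Sum>j\<in>{1..nblocks s n}. (block_S s Y n j x)\<^sup>2) < 1/4"
  shows "\<bar>U1 s (\<lambda>_. sig) mu Y n x - U2 s Y n x\<bar>
    \<le> 4 / real (nblocks s n) * (\<Sum>j\<in>{1..nblocks s n}. (block_S s Y n j x)\<^sup>2)"
proof -
  have "\<bar>block_S s Y n j x\<bar> \<le> 1/2" if "j \<in> {1..nblocks s n}" for j
  proof -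
    have "(block_S s Y n j x)\<^sup>2 \<le> (\<Sum>j\<in>{1..nblocks s n}. (block_S s Y n j x)\<^sup>2)"
      using that by (intro member_le_sum) auto
    then have "(2 * block_S s Y n j x)\<^sup>2 \<le> 1\<^sup>2"
      using small by (simp add: power_mult_distrib)
    then show ?thesis
      using abs_le_square_iff[of "2 * block_S s Y n j x" 1] by simp
  qed
  then show ?thesis
    unfolding U1_def U2_def block_var_const_eq
    using ustat_abs_ln_linearisation[of "sig\<^sup>2" "nblocks s n" "\<lambda>j. block_S s Y n j x"] assms
    by simp
qed

section \<open>Growth of the block parameters\<close>

lemma blen_nblocks_bounds:
  assumes s: "1/2 < s" "s < 1"
  shows "eventually (\<lambda>n. 1 \<le> blen s n \<and> 1 \<le> nblocks s n \<and>
     real (nblocks s n) / real (blen s n) \<le> 4 * real n powr (1 - 2 * s) \<and>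
     sqrt (real n) / real (blen s n) \<le> 2 * real n powr (1/2 - s)) sequentially"
  using eventually_ge_at_top[of "4::nat"]
proof eventually_elim
  case (elim n)
  define p where "p = real n powr s"
  have n1: "1 \<le> real n" using elim by simp
  have "2 \<le> sqrt (real n)" using elim
    by (metis numeral_le_real_of_nat_iff real_sqrt_four real_sqrt_le_mono)
  moreover have "sqrt (real n) = real n powr (1/2)" by (simp add: powr_half_sqrt)
  moreover have "real n powr (1/2) \<le> p" unfolding p_def using n1 s by (intro powr_mono) auto
  ultimately have p2: "2 \<le> p" by linarith
  have pn: "p \<le> real n" unfolding p_def using n1 s powr_mono[of s 1 "real n"] by auto
  have "real (blen s n) = of_int \<lfloor>p\<rfloor>" using p2 unfolding blen_def p_def by simp
  then have L: "p / 2 \<le> real (blen s n)" "real (blen s n) \<le> real n" "1 \<le> blen s n"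
    using p2 pn by linarith+
  have "real (nblocks s n * blen s n) \<le> real n"
    unfolding nblocks_def of_nat_le_iff by (rule div_times_less_eq_dividend)
  then have b: "real (nblocks s n) \<le> real n / real (blen s n)"
    using L by (simp add: field_simps)
  have "1 \<le> nblocks s n"
    unfolding nblocks_def using L by (simp add: div_greater_zero_iff Suc_le_eq)
  moreover have "real (nblocks s n) / real (blen s n) \<le> 4 * real n powr (1 - 2 * s)"
  proof -
    have "real (nblocks s n) / real (blen s n) \<le> real n / (real (blen s n))\<^sup>2"
      using divide_right_mono[OF b, of "real (blen s n)"] L by (simp add: power2_eq_square)
    also have "\<dots> \<le> real n / (p / 2)\<^sup>2"
      using L p2 n1 by (intro divide_left_mono power_mono mult_pos_pos) auto
    also have "\<dots> = 4 * real n powr (1 - 2 * s)"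
      unfolding p_def using n1
      by (simp add: powr_diff powr_mult_base power2_eq_square powr_add[symmetric])
    finally show ?thesis .
  qed
  moreover have "sqrt (real n) / real (blen s n) \<le> 2 * real n powr (1/2 - s)"
  proof -
    have "sqrt (real n) / real (blen s n) \<le> sqrt (real n) / (p / 2)"
      using L p2 by (intro divide_left_mono) auto
    also have "\<dots> = 2 * real n powr (1/2 - s)"
      unfolding p_def using n1 by (simp add: powr_half_sqrt[symmetric] powr_diff)
    finally show ?thesis .
  qed
  ultimately show ?case using L by simp
qed

lemma blen_nblocks_limits:
  assumes s: "1/2 < s" "s < 1"
  shows "eventually (\<lambda>n. 1 \<le> blen s n \<and> 1 \<le> nblocks s n) sequentially"
    and "(\<lambda>n. real (nblocks s n) / real (blen s n)) \<longlonglongrightarrow> 0"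
    and "(\<lambda>n. sqrt (real n) / real (blen s n)) \<longlonglongrightarrow> 0"
proof -
  note bounds = blen_nblocks_bounds[OF s]
  show "eventually (\<lambda>n. 1 \<le> blen s n \<and> 1 \<le> nblocks s n) sequentially"
    using bounds by eventually_elim auto
  have lim: "(\<lambda>n. 4 * real n powr (1 - 2 * s)) \<longlonglongrightarrow> 0" "(\<lambda>n. 2 * real n powr (1/2 - s)) \<longlonglongrightarrow> 0"
    using s by (intro tendsto_mult_right_zero tendsto_neg_powr filterlim_real_sequentially; simp)+
  have le: "eventually (\<lambda>n. real (nblocks s n) / real (blen s n) \<le> 4 * real n powr (1 - 2 * s)) sequentially"
    "eventually (\<lambda>n. sqrt (real n) / real (blen s n) \<le> 2 * real n powr (1/2 - s)) sequentially"
    by (rule eventually_mono[OF bounds], simp)+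
  show "(\<lambda>n. real (nblocks s n) / real (blen s n)) \<longlonglongrightarrow> 0"
    by (rule tendsto_sandwich[OF _ le(1) tendsto_const lim(1)]) simp
  show "(\<lambda>n. sqrt (real n) / real (blen s n)) \<longlonglongrightarrow> 0"
    by (rule tendsto_sandwich[OF _ le(2) tendsto_const lim(2)]) simp
qed

section \<open>Convergence in probability\<close>

text \<open>On the event \<open>T\<^sub>n < c\<close> the quantity \<open>Z\<^sub>n\<close> is dominated by \<open>r\<^sub>n T\<^sub>n\<close>; Markov's inequality controls
  both the complement of that event and the event \<open>r\<^sub>n T\<^sub>n \<ge> \<epsilon>\<close>.\<close>
lemma (in prob_space) measure_abs_gt_tendsto_zero_if_dominated:
  fixes Z T :: "nat \<Rightarrow> 'a \<Rightarrow> real" and r e :: "nat \<Rightarrow> real"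
  assumes "0 < c" "0 < \<epsilon>"
    and moment: "eventually (\<lambda>n. integrable M (T n) \<and> expectation (T n) \<le> e n) sequentially"
    and nonneg: "\<And>n x. x \<in> space M \<Longrightarrow> 0 \<le> T n x" "\<And>n. 0 \<le> r n"
    and dom: "\<And>n x. x \<in> space M \<Longrightarrow> T n x < c \<Longrightarrow> \<bar>Z n x\<bar> \<le> r n * T n x"
    and "e \<longlonglongrightarrow> 0" "(\<lambda>n. r n * e n) \<longlonglongrightarrow> 0"
  shows "(\<lambda>n. measure M {x \<in> space M. \<bar>Z n x\<bar> > \<epsilon>}) \<longlonglongrightarrow> 0"
proof (rule tendsto_sandwich[OF _ _ tendsto_const])
  show "(\<lambda>n. e n / c + r n * e n / \<epsilon>) \<longlonglongrightarrow> 0"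
    using assms by (intro tendsto_add_zero tendsto_divide_zero)
  show "eventually (\<lambda>n. 0 \<le> measure M {x \<in> space M. \<bar>Z n x\<bar> > \<epsilon>}) sequentially"
    by simp
  show "eventually (\<lambda>n. measure M {x \<in> space M. \<bar>Z n x\<bar> > \<epsilon>} \<le> e n / c + r n * e n / \<epsilon>) sequentially"
    using moment
  proof eventually_elim
    case (elim n)
    then have T [measurable]: "T n \<in> borel_measurable M" by auto
    have "c \<le> T n x \<or> \<epsilon> \<le> r n * T n x" if "x \<in> space M" "\<epsilon> < \<bar>Z n x\<bar>" for x
      using dom[OF that(1), of n] that(2) by (cases "T n x < c") auto
    then have "{x \<in> space M. \<bar>Z n x\<bar> > \<epsilon>} \<subseteq> {x \<in> space M. c \<le> T n x} \<union> {x \<in> space M. \<epsilon> \<le> r n * T n x}"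
      by auto
    then have "measure M {x \<in> space M. \<bar>Z n x\<bar> > \<epsilon>}
        \<le> measure M {x \<in> space M. c \<le> T n x} + measure M {x \<in> space M. \<epsilon> \<le> r n * T n x}"
      by (intro order_trans[OF finite_measure_mono measure_Un_le]) auto
    also have "\<dots> \<le> expectation (T n) / c + expectation (\<lambda>x. r n * T n x) / \<epsilon>"
      using elim nonneg assms(1,2)
      by (intro add_mono integral_Markov_inequality_measure[where A="space M"]) auto
    also have "\<dots> \<le> e n / c + r n * e n / \<epsilon>"
      using elim nonneg assms(1,2) by (intro add_mono divide_right_mono) (auto intro: mult_left_mono)
    finally show ?case .
  qed
qed

theorem proposition3p2:
  fixes M :: "'a measure" and Y :: "nat \<Rightarrow> 'a \<Rightarrow> real"
    and mu :: "real \<Rightarrow> real" and sigmaH s theta :: real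
  assumes prob: "prob_space M"
    and meas: "\<And>i. Y i \<in> borel_measurable M"
    and stat: "strictly_stationary M Y"
    and mean0: "integrable M (Y 1)" "(\<integral>x. Y 1 x \<partial>M) = 0"
    and var1: "integrable M (\<lambda>x. (Y 1 x)\<^sup>2)" "(\<integral>x. (Y 1 x)\<^sup>2 \<partial>M) = 1"
    and abs_reg: "(\<lambda>k. beta_Y M Y k) \<longlonglongrightarrow> 0"
    and lip: "\<exists>C. C-lipschitz_on {0..1} mu"
    and sigH: "sigmaH > 0"
    and kappa_fin: "summable (\<lambda>k. (\<integral>x. (Y 1 x)\<^sup>2 * (Y (k + 2) x)\<^sup>2 \<partial>M) - 1)"
    and kappa_pos: "(\<integral>x. (Y 1 x) ^ 4 \<partial>M) - 1
                    + 2 * (\<Sum>k. (\<integral>x. (Y 1 x)\<^sup>2 * (Y (k + 2) x)\<^sup>2 \<partial>M) - 1) > 0"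
    and theta: "theta > 0"
    and A1: "integrable M (\<lambda>x. \<bar>Y 1 x\<bar> powr (4 + 2 * theta))"
    and A2: "summable (\<lambda>k. beta_Y M Y (Suc k) powr (theta / (2 + theta)))"
    and s: "0.5 < s" "s < 1"
  shows "\<forall>\<epsilon>>0. (\<lambda>n. measure M {x \<in> space M.
           \<bar>sqrt (real n) * (U1 s (\<lambda>_. sigmaH) mu Y n x - U2 s Y n x)\<bar> > \<epsilon>}) \<longlonglongrightarrow> 0"
proof (intro allI impI)
  fix \<epsilon> :: real assume "\<epsilon> > 0"
  interpret prob_space M by (rule prob)
  interpret stationary_L4_process M Y
    using meas stat var1 integrable_power4_if_integrable_abs_powr[OF meas theta A1] by unfold_locales
  define T where "T n x = (\<Sum>j\<in>{1..nblocks s n}. (block_S s Y n j x)\<^sup>2)" for n x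
  define r where "r n = 4 * sqrt (real n) / real (nblocks s n)" for n
  have "summable (\<lambda>d. sq_autocov (Suc d))" using kappa_fin by (simp add: sq_autocov_def)
  then obtain K where K: "\<And>n. 1 \<le> blen s n \<Longrightarrow>
      integrable M (T n) \<and> expectation (T n) \<le> real (nblocks s n) * K / real (blen s n)"
    unfolding T_def using sum_block_S_sq_bound by metis
  have "1/2 < s" using s by simp
  note blocks = blen_nblocks_limits[OF this s(2)]
  have moment: "\<forall>\<^sub>F n in sequentially.
      integrable M (T n) \<and> expectation (T n) \<le> real (nblocks s n) * K / real (blen s n)"
    using blocks(1) by eventually_elim (simp add: K)
  have e_lim: "(\<lambda>n. real (nblocks s n) * K / real (blen s n)) \<longlonglongrightarrow> 0"
    using tendsto_mult_right_zero[OF blocks(2), of K] by (simp add: mult.commute)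
  have re_lim: "(\<lambda>n. r n * (real (nblocks s n) * K / real (blen s n))) \<longlonglongrightarrow> 0"
  proof (rule Lim_transform_eventually)
    show "(\<lambda>n. 4 * K * (sqrt (real n) / real (blen s n))) \<longlonglongrightarrow> 0"
      by (rule tendsto_mult_right_zero[OF blocks(3)])
    show "\<forall>\<^sub>F n in sequentially. 4 * K * (sqrt (real n) / real (blen s n))
        = r n * (real (nblocks s n) * K / real (blen s n))"
      using blocks(1) by eventually_elim (simp add: r_def)
  qed
  have dom: "\<bar>sqrt (real n) * (U1 s (\<lambda>_. sigmaH) mu Y n x - U2 s Y n x)\<bar> \<le> r n * T n x"
    if "T n x < 1/4" for n x
    using mult_left_mono[OF abs_U1_const_minus_U2_le[OF _ that[unfolded T_def]], of sigmaH "sqrt (real n)" mu]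
      sigH by (simp add: abs_mult mult_ac T_def r_def)
  show "(\<lambda>n. measure M {x \<in> space M.
      \<bar>sqrt (real n) * (U1 s (\<lambda>_. sigmaH) mu Y n x - U2 s Y n x)\<bar> > \<epsilon>}) \<longlonglongrightarrow> 0"
    by (rule measure_abs_gt_tendsto_zero_if_dominated[where c="1/4", OF _ \<open>\<epsilon> > 0\<close> moment _ _ dom e_lim re_lim])
      (auto simp: T_def r_def sum_nonneg)
qed

end
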